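(* Let $X\in\mathbb R^{d\times d}$ be symmetric positive definite and $A\in\mathbb R^{d\times d}$ symmetric positive semidefinite. Then for all $0<c\le C$, $$X^{-1/2}AX^{-1/2}\preceq\frac{3(\log C-\log c)}{\pi^2}\,\partial\log(X)[A]+\Big(\frac{12cd}{\pi^2\lambda_{\min}(X)^2}+\frac{12d}{\pi^2C}\Big)\operatorname{Tr}(A)\,I_d.$$
   Context: $\partial\log(X)[A]:=\lim_{\delta\to0}\frac{\log(X+\delta A)-\log X}{\delta}=\int_0^\infty (X+zI_d)^{-1}A(X+zI_d)^{-1}\,dz$ is the directional (Fréchet) derivative of the matrix logarithm at $X$ in direction $A$; $\lambda_{\min}(X)$ is the smallest eigenvalue of $X$; $\preceq$ is the Loewner order. *)

theory Defs
  imports "HOL-Analysis.Analysis"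
begin

definition sym_mat :: "real^'n^'n \<Rightarrow> bool" where
  "sym_mat M \<longleftrightarrow> transpose M = M"

definition psd :: "real^'n^'n \<Rightarrow> bool" where
  "psd M \<longleftrightarrow> sym_mat M \<and> (\<forall>x. 0 \<le> x \<bullet> (M *v x))"

definition pd :: "real^'n^'n \<Rightarrow> bool" where
  "pd M \<longleftrightarrow> sym_mat M \<and> (\<forall>x. x \<noteq> 0 \<longrightarrow> 0 < x \<bullet> (M *v x))"

definition loewner_le :: "real^'n^'n \<Rightarrow> real^'n^'n \<Rightarrow> bool" where
  "loewner_le M N \<longleftrightarrow> psd (N - M)"

definition eigenvalues :: "real^'n^'n \<Rightarrow> real set" where
  "eigenvalues M = {l. \<exists>v. v \<noteq> 0 \<and> M *v v = l *\<^sub>R v}"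

definition lambda_min :: "real^'n^'n \<Rightarrow> real" where
  "lambda_min M = Min (eigenvalues M)"

definition inv_sqrt :: "real^'n^'n \<Rightarrow> real^'n^'n" where
  "inv_sqrt X = (THE S. pd S \<and> S ** S = matrix_inv X)"

text \<open>Frechet derivative of the matrix logarithm at X in direction A, given by the integral formula.\<close>
definition dlog :: "real^'n^'n \<Rightarrow> real^'n^'n \<Rightarrow> real^'n^'n" where
  "dlog X A = integral {0..} (\<lambda>z::real. matrix_inv (X + z *\<^sub>R mat 1) ** A ** matrix_inv (X + z *\<^sub>R mat 1))"

end

theory Submission
  imports Defs "HOL-Real_Asymp.Real_Asymp"
begin

(* Diagonalise X = \<Sum> x_k u_k u_k^T. Then X^(-1/2) = (1/pi) \<Integral>_0^\<infinity> a^(-1/2) (X + a)^(-1) da, so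
   with s = X^(-1/2) v and R_a = (X + a)^(-1) the quantity M = s^T A s equals
   (1/pi) \<Integral> a^(-1/2) (R_a v)^T A s da.  The integrand is bounded by AM-GM with a weight adapted
   to each of the ranges [0, c], [c, C], [C, \<infinity>): on the middle range this produces
   (R_a v)^T A (R_a v), whose integral is v^T dlog(X)[A] v, and elsewhere the crude bound
   (R_a v)^T A (R_a v) \<le> Tr(A) |v|^2 / (lambda_min + a)^2 suffices.  The weights are chosen so that
   each range returns pi M / 6, which is absorbed into the left-hand side. *)

section \<open>Spectral theorem for real symmetric matrices\<close>

lemma symmetric_matrix_inner_swap:
  fixes M :: "real^'n^'n"
  assumes "transpose M = M"
  shows "(M *v x) \<bullet> y = x \<bullet> (M *v y)"
proof -
  have "x \<bullet> (M *v y) = (transpose M *v x) \<bullet> y"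
    by (simp add: dot_lmul_matrix transpose_matrix_vector)
  then show ?thesis using assms by simp
qed

lemma quadratic_nonpos_imp_linear_coeff_zero:
  fixes b c :: real
  assumes "\<And>t. 2 * t * b + t\<^sup>2 * c \<le> 0"
  shows "b = 0"
proof (rule ccontr)
  assume "b \<noteq> 0"
  define e where "e = \<bar>c\<bar> + 1"
  have e: "e > 0" unfolding e_def by simp
  have "(2 * (b / e) * b + (b / e)\<^sup>2 * c) * e\<^sup>2 \<le> 0"
    using assms[of "b / e"] by (simp add: mult_nonpos_nonneg)
  moreover have "(2 * (b / e) * b + (b / e)\<^sup>2 * c) * e\<^sup>2 = b\<^sup>2 * (2 * e + c)"
    using e by (simp add: field_simps power2_eq_square)
  moreover have "b\<^sup>2 * (2 * e + c) > 0"
    using \<open>b \<noteq> 0\<close> unfolding e_def by (intro mult_pos_pos) auto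
  ultimately show False by linarith
qed

lemma symmetric_invariant_subspace_has_eigenvector:
  fixes M :: "real^'n^'n"
  assumes sym: "transpose M = M" and U: "subspace U" and inv: "\<And>x. x \<in> U \<Longrightarrow> M *v x \<in> U"
    and nontrivial: "U \<noteq> {0}"
  shows "\<exists>v\<in>U. norm v = 1 \<and> M *v v = (v \<bullet> (M *v v)) *\<^sub>R v"
proof -
  let ?S = "U \<inter> sphere 0 1"
  obtain u where u: "u \<in> U" "u \<noteq> 0" using nontrivial U subspace_0 by blast
  then have "u /\<^sub>R norm u \<in> ?S" using U by (simp add: subspace_scale)
  then have nonempty: "?S \<noteq> {}" by blast
  have compact: "compact ?S"
    using closed_subspace[OF U] compact_sphere by (simp add: closed_Int_compact)
  have "continuous_on ?S (\<lambda>v. v \<bullet> (M *v v))"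
    by (intro continuous_intros matrix_vector_mult_linear_continuous_on)
  then obtain v where v: "v \<in> ?S" and vmax: "\<And>w. w \<in> ?S \<Longrightarrow> w \<bullet> (M *v w) \<le> v \<bullet> (M *v v)"
    using continuous_attains_sup[OF compact nonempty] by blast
  define \<mu> where "\<mu> = v \<bullet> (M *v v)"
  have vU: "v \<in> U" and nv: "norm v = 1" using v by auto
  have vv: "v \<bullet> v = 1" using nv by (simp add: norm_eq_1)
  have rayleigh: "w \<bullet> (M *v w) \<le> \<mu> * (w \<bullet> w)" if "w \<in> U" for w
  proof (cases "w = 0")
    case False
    have "w /\<^sub>R norm w \<in> ?S" using that False U by (simp add: subspace_scale)
    then have "(w /\<^sub>R norm w) \<bullet> (M *v (w /\<^sub>R norm w)) \<le> \<mu>" using vmax \<mu>_def by blast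
    then have "(w \<bullet> (M *v w)) / (norm w)\<^sup>2 \<le> \<mu>"
      by (simp add: matrix_vector_mult_scaleR power2_eq_square divide_inverse mult_ac)
    then show ?thesis using False by (simp add: divide_simps power2_norm_eq_inner mult.commute)
  qed simp
  have orth: "y \<bullet> (M *v v) = 0" if y: "y \<in> U" "y \<bullet> v = 0" for y
  proof (rule quadratic_nonpos_imp_linear_coeff_zero)
    fix t :: real
    have "v + t *\<^sub>R y \<in> U" using U vU y by (simp add: subspace_add subspace_scale)
    from rayleigh[OF this]
    have "\<mu> + 2 * t * (y \<bullet> (M *v v)) + t\<^sup>2 * (y \<bullet> (M *v y)) \<le> \<mu> * (1 + t\<^sup>2 * (y \<bullet> y))"
      using symmetric_matrix_inner_swap[OF sym, of v y] vv y(2)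
      by (simp add: \<mu>_def matrix_vector_right_distrib matrix_vector_mult_scaleR inner_add_left
          inner_add_right inner_commute algebra_simps power2_eq_square)
    then show "2 * t * (y \<bullet> (M *v v)) + t\<^sup>2 * (y \<bullet> (M *v y) - \<mu> * (y \<bullet> y)) \<le> 0"
      by (simp add: algebra_simps)
  qed
  define z where "z = M *v v - \<mu> *\<^sub>R v"
  have zU: "z \<in> U" unfolding z_def using U inv[OF vU] vU by (simp add: subspace_diff subspace_scale)
  have zv: "z \<bullet> v = 0"
    unfolding z_def using vv inner_commute[of "M *v v" v] by (simp add: inner_diff_left \<mu>_def)
  have "z \<bullet> z = z \<bullet> (M *v v) - \<mu> * (z \<bullet> v)" unfolding z_def by (simp add: inner_diff_right)
  also have "\<dots> = 0" using orth[OF zU zv] zv by simp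
  finally have "z = 0" by simp
  then show ?thesis using vU nv unfolding z_def \<mu>_def by auto
qed

lemma symmetric_invariant_subspace_orthonormal_eigenbasis:
  fixes M :: "real^'n^'n"
  assumes sym: "transpose M = M"
  shows "subspace U \<Longrightarrow> (\<And>x. x \<in> U \<Longrightarrow> M *v x \<in> U) \<Longrightarrow>
    \<exists>B. B \<subseteq> U \<and> pairwise orthogonal B \<and> (\<forall>b\<in>B. norm b = 1 \<and> (\<exists>l. M *v b = l *\<^sub>R b)) \<and> span B = U"
proof (induction "dim U" arbitrary: U rule: less_induct)
  case less
  show ?case
  proof (cases "U = {0}")
    case True then show ?thesis by (intro exI[of _ "{}"]) auto
  next
    case False
    obtain v where vU: "v \<in> U" and nv: "norm v = 1" and ev: "M *v v = (v \<bullet> (M *v v)) *\<^sub>R v"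
      using symmetric_invariant_subspace_has_eigenvector[OF sym less.prems False] by blast
    have vv: "v \<bullet> v = 1" using nv by (simp add: norm_eq_1)
    define U' where "U' = {y \<in> U. v \<bullet> y = 0}"
    have sub: "subspace U'"
      using less.prems(1) unfolding U'_def subspace_def by (auto simp: inner_add_right)
    have inv': "M *v y \<in> U'" if "y \<in> U'" for y
    proof -
      have "v \<bullet> (M *v y) = (v \<bullet> (M *v v)) * (v \<bullet> y)"
        using symmetric_matrix_inner_swap[OF sym, of v y] ev by (metis inner_scaleR_left)
      then show ?thesis using that less.prems(2) unfolding U'_def by auto
    qed
    have "v \<notin> U'" using vv unfolding U'_def by auto
    then have "U' \<subset> U" using vU unfolding U'_def by blast
    moreover have "span U' = U'" "span U = U" using sub less.prems(1) by (simp_all add: span_eq_iff)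
    ultimately have "span U' \<subset> span U" by (simp only:)
    then have "dim U' < dim U" by (rule dim_psubset)
    then obtain B' where B': "B' \<subseteq> U'" "pairwise orthogonal B'"
        "\<forall>b\<in>B'. norm b = 1 \<and> (\<exists>l. M *v b = l *\<^sub>R b)" "span B' = U'"
      using less.hyps[OF _ sub inv'] by blast
    show ?thesis
    proof (intro exI[of _ "insert v B'"] conjI)
      show "insert v B' \<subseteq> U" using vU B'(1) unfolding U'_def by auto
      show "pairwise orthogonal (insert v B')"
        using B'(1,2) unfolding U'_def by (auto simp: pairwise_insert orthogonal_def inner_commute)
      show "\<forall>b\<in>insert v B'. norm b = 1 \<and> (\<exists>l. M *v b = l *\<^sub>R b)" using B'(3) nv ev by auto
      show "span (insert v B') = U"
      proof
        show "span (insert v B') \<subseteq> U"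
          using vU B'(1) less.prems(1) unfolding U'_def by (intro span_minimal) auto
        show "U \<subseteq> span (insert v B')"
        proof
          fix u assume u: "u \<in> U"
          then have "u - (v \<bullet> u) *\<^sub>R v \<in> U'"
            using vU less.prems(1) vv unfolding U'_def
            by (auto simp: subspace_diff subspace_scale inner_diff_right)
          then have "u - (v \<bullet> u) *\<^sub>R v \<in> span B'" using B'(4) by simp
          then show "u \<in> span (insert v B')" by (auto simp: span_breakdown_eq)
        qed
      qed
    qed
  qed
qed

definition orthonormal_basis :: "('n \<Rightarrow> real^'n) \<Rightarrow> bool" where
  "orthonormal_basis u \<longleftrightarrow>
     (\<forall>i j. u i \<bullet> u j = (if i = j then 1 else 0)) \<and> (\<forall>v. v = (\<Sum>i\<in>UNIV. (u i \<bullet> v) *\<^sub>R u i))"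

definition eigenbasis :: "real^'n^'n \<Rightarrow> ('n \<Rightarrow> real^'n) \<Rightarrow> ('n \<Rightarrow> real) \<Rightarrow> bool" where
  "eigenbasis M u x \<longleftrightarrow> orthonormal_basis u \<and> (\<forall>i. M *v u i = x i *\<^sub>R u i)"

lemma orthonormal_basis_inner: "orthonormal_basis u \<Longrightarrow> u i \<bullet> u j = (if i = j then 1 else 0)"
  unfolding orthonormal_basis_def by blast

lemma orthonormal_basis_expansion: "orthonormal_basis u \<Longrightarrow> v = (\<Sum>i\<in>UNIV. (u i \<bullet> v) *\<^sub>R u i)"
  unfolding orthonormal_basis_def by blast

lemma eigenbasisD:
  assumes "eigenbasis M u x"
  shows "orthonormal_basis u" "M *v u i = x i *\<^sub>R u i"
  using assms unfolding eigenbasis_def by blast+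

lemma symmetric_matrix_has_eigenbasis:
  fixes M :: "real^'n^'n"
  assumes sym: "transpose M = M"
  obtains u x where "eigenbasis M u x"
proof -
  obtain B where B: "pairwise orthogonal B" "\<forall>b\<in>B. norm b = 1 \<and> (\<exists>l. M *v b = l *\<^sub>R b)"
     "span B = UNIV"
    using symmetric_invariant_subspace_orthonormal_eigenbasis[OF sym, of UNIV] by auto
  have "independent B" using B(1,2) pairwise_orthogonal_independent by fastforce
  then have fin: "finite B" and "card B = dim (span B)" using indep_card_eq_dim_span by auto
  then have "card B = CARD('n)" using B(3) by (simp add: dim_UNIV)
  then obtain h where h: "bij_betw h (UNIV::'n set) B"
    using finite_same_card_bij[OF finite fin] by auto
  then have hB: "h i \<in> B" for i using bij_betwE by blast
  define x where "x i = (SOME l. M *v h i = l *\<^sub>R h i)" for i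
  have ev: "M *v h i = x i *\<^sub>R h i" for i
    unfolding x_def using B(2) hB by (meson someI)
  have on: "h i \<bullet> h j = (if i = j then 1 else 0)" for i j
  proof (cases "i = j")
    case False
    then have "h i \<noteq> h j" using h by (metis bij_betw_iff_bijections UNIV_I)
    then show ?thesis using B(1) hB False by (auto simp: pairwise_def orthogonal_def)
  qed (use B(2) hB in \<open>auto simp: norm_eq_1\<close>)
  have "v = (\<Sum>i\<in>UNIV. (h i \<bullet> v) *\<^sub>R h i)" for v
  proof -
    define w where "w = v - (\<Sum>i\<in>UNIV. (h i \<bullet> v) *\<^sub>R h i)"
    have wo: "h j \<bullet> w = 0" for j
    proof -
      have "h j \<bullet> (\<Sum>i\<in>UNIV. (h i \<bullet> v) *\<^sub>R h i) = (\<Sum>i\<in>UNIV. if i = j then h j \<bullet> v else 0)"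
        by (simp add: inner_sum_right on if_distrib cong: if_cong)
      then show ?thesis unfolding w_def by (simp add: inner_diff_right)
    qed
    have "orthogonal w w"
    proof (rule orthogonal_to_span)
      show "w \<in> span B" using B(3) by simp
      fix y assume "y \<in> B"
      then obtain j where "y = h j" using h by (metis bij_betw_imp_surj_on imageE)
      then show "orthogonal w y" using wo by (simp add: orthogonal_def inner_commute)
    qed
    then show ?thesis unfolding w_def by (simp add: orthogonal_self)
  qed
  then have "orthonormal_basis h" using on unfolding orthonormal_basis_def by blast
  then show ?thesis using ev by (intro that[of h x]) (simp add: eigenbasis_def)
qed

definition outer :: "real^'n \<Rightarrow> real^'n^'n" where
  "outer a = (\<chi> i j. a$i * a$j)"

definition spectral_matrix :: "('n \<Rightarrow> real^'n) \<Rightarrow> ('n \<Rightarrow> real) \<Rightarrow> real^'n^'n" where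
  "spectral_matrix u f = (\<Sum>k\<in>UNIV. f k *\<^sub>R outer (u k))"

lemma orthonormal_basis_coeff:
  assumes "orthonormal_basis u"
  shows "u k \<bullet> (\<Sum>l\<in>UNIV. c l *\<^sub>R u l) = c k"
  by (simp add: inner_sum_right orthonormal_basis_inner[OF assms] if_distrib cong: if_cong)

lemma orthonormal_basis_nonzero_coeff:
  assumes "orthonormal_basis u" "v \<noteq> 0"
  obtains k where "u k \<bullet> v \<noteq> 0"
  using orthonormal_basis_expansion[OF assms(1), of v] assms(2) by force

lemma matrix_vector_mult_sum:
  fixes A :: "'k \<Rightarrow> real^'n^'m"
  shows "(\<Sum>k\<in>S. A k) *v v = (\<Sum>k\<in>S. A k *v v)"
  by (induction S rule: infinite_finite_induct) (auto simp: matrix_vector_mult_add_rdistrib)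

lemma matrix_mult_sum_left:
  fixes M :: "'k \<Rightarrow> real^'n^'m" and B :: "real^'p^'n"
  shows "(\<Sum>k\<in>S. M k) ** B = (\<Sum>k\<in>S. M k ** B)"
  by (induction S rule: infinite_finite_induct)
    (auto simp: vec_eq_iff matrix_matrix_mult_def sum.distrib ring_distribs)

lemma matrix_mult_sum_right:
  fixes M :: "'k \<Rightarrow> real^'p^'n" and B :: "real^'n^'m"
  shows "B ** (\<Sum>k\<in>S. M k) = (\<Sum>k\<in>S. B ** M k)"
  by (induction S rule: infinite_finite_induct) (auto simp: matrix_add_ldistrib)

lemma outer_mult_vector: "outer a *v v = (a \<bullet> v) *\<^sub>R a"
  unfolding outer_def
  by (simp add: vec_eq_iff matrix_vector_mult_def inner_vec_def sum_distrib_left algebra_simps)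

lemma spectral_matrix_mult_vector:
  "spectral_matrix u f *v v = (\<Sum>k\<in>UNIV. (f k * (u k \<bullet> v)) *\<^sub>R u k)"
  unfolding spectral_matrix_def matrix_vector_mult_sum
  by (simp add: outer_mult_vector flip: scaleR_matrix_vector_assoc)

lemma spectral_matrix_coeff:
  "orthonormal_basis u \<Longrightarrow> u k \<bullet> (spectral_matrix u f *v v) = f k * (u k \<bullet> v)"
  unfolding spectral_matrix_mult_vector by (rule orthonormal_basis_coeff)

lemma spectral_matrix_mult:
  assumes "orthonormal_basis u"
  shows "spectral_matrix u f ** spectral_matrix u g = spectral_matrix u (\<lambda>k. f k * g k)"
  unfolding matrix_eq
proof
  fix v
  have "(spectral_matrix u f ** spectral_matrix u g) *v v = spectral_matrix u f *v (spectral_matrix u g *v v)"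
    by (simp add: matrix_vector_mul_assoc)
  also have "\<dots> = spectral_matrix u (\<lambda>k. f k * g k) *v v"
    by (simp add: spectral_matrix_mult_vector[of u f] spectral_matrix_coeff[OF assms]
        spectral_matrix_mult_vector[of u "\<lambda>k. f k * g k"] mult.assoc)
  finally show "(spectral_matrix u f ** spectral_matrix u g) *v v = spectral_matrix u (\<lambda>k. f k * g k) *v v" .
qed

lemma spectral_matrix_one:
  assumes "orthonormal_basis u"
  shows "spectral_matrix u (\<lambda>k. 1) = mat 1"
  unfolding matrix_eq
  using orthonormal_basis_expansion[OF assms] by (simp add: spectral_matrix_mult_vector)

lemma spectral_matrix_add: "spectral_matrix u (\<lambda>k. f k + g k) = spectral_matrix u f + spectral_matrix u g"
  unfolding spectral_matrix_def by (simp add: scaleR_add_left sum.distrib)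

lemma spectral_matrix_scaleR: "spectral_matrix u (\<lambda>k. c * f k) = c *\<^sub>R spectral_matrix u f"
  unfolding spectral_matrix_def by (simp add: scaleR_sum_right)

lemma spectral_matrix_symmetric: "transpose (spectral_matrix u f) = spectral_matrix u f"
  by (simp add: vec_eq_iff transpose_def spectral_matrix_def outer_def sum_component mult.commute)

lemma eigenbasis_spectral_matrix:
  assumes "eigenbasis M u x"
  shows "M = spectral_matrix u x"
  unfolding matrix_eq
proof
  fix v
  note on = eigenbasisD(1)[OF assms]
  have "M *v v = M *v (\<Sum>i\<in>UNIV. (u i \<bullet> v) *\<^sub>R u i)"
    using orthonormal_basis_expansion[OF on] by metis
  also have "\<dots> = spectral_matrix u x *v v"
    by (simp add: vec.sum matrix_vector_mult_scaleR eigenbasisD(2)[OF assms]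
        spectral_matrix_mult_vector mult.commute)
  finally show "M *v v = spectral_matrix u x *v v" .
qed

lemma spectral_matrix_quadratic_form:
  "v \<bullet> (spectral_matrix u f *v v) = (\<Sum>k\<in>UNIV. f k * (u k \<bullet> v)\<^sup>2)"
  by (simp add: spectral_matrix_mult_vector inner_sum_right power2_eq_square inner_commute mult.assoc)

lemma orthonormal_basis_parseval:
  assumes "orthonormal_basis u"
  shows "v \<bullet> v = (\<Sum>k\<in>UNIV. (u k \<bullet> v)\<^sup>2)"
  using spectral_matrix_quadratic_form[where u = u and f = "\<lambda>k. 1"] spectral_matrix_one[OF assms] by simp

lemma spectral_matrix_norm_le:
  assumes on: "orthonormal_basis u" and f: "\<And>k. \<bar>f k\<bar> \<le> B"
  shows "(spectral_matrix u f *v v) \<bullet> (spectral_matrix u f *v v) \<le> B\<^sup>2 * (v \<bullet> v)"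
proof -
  have "(spectral_matrix u f *v v) \<bullet> (spectral_matrix u f *v v)
      = (\<Sum>k\<in>UNIV. (f k * (u k \<bullet> v)) * (f k * (u k \<bullet> v)))"
    by (simp add: spectral_matrix_mult_vector[of u f v] inner_sum_left orthonormal_basis_coeff[OF on])
  also have "\<dots> = (\<Sum>k\<in>UNIV. (f k)\<^sup>2 * (u k \<bullet> v)\<^sup>2)"
    by (simp add: power2_eq_square mult_ac)
  also have "\<dots> \<le> (\<Sum>k\<in>UNIV. B\<^sup>2 * (u k \<bullet> v)\<^sup>2)"
    using power_mono[OF f abs_ge_zero, of _ 2] by (intro sum_mono mult_right_mono) auto
  also have "\<dots> = B\<^sup>2 * (v \<bullet> v)"
    by (simp add: orthonormal_basis_parseval[OF on] sum_distrib_left)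
  finally show ?thesis .
qed

lemma trace_sum: "trace (\<Sum>k\<in>S. A k) = (\<Sum>k\<in>S. trace (A k))"
  unfolding trace_def by (simp add: sum_component sum.swap[of _ S])

lemma trace_scaleR: "trace (c *\<^sub>R (A :: real^'n^'n)) = c * trace A"
  unfolding trace_def by (simp add: sum_distrib_left)

lemma trace_outer: "trace (outer a) = a \<bullet> a"
  unfolding trace_def outer_def by (simp add: inner_vec_def)

lemma trace_spectral_matrix:
  assumes "orthonormal_basis u"
  shows "trace (spectral_matrix u f) = (\<Sum>k\<in>UNIV. f k)"
  unfolding spectral_matrix_def trace_sum
  by (simp add: trace_scaleR trace_outer orthonormal_basis_inner[OF assms])

lemma pd_spectral_matrix:
  fixes u :: "'n \<Rightarrow> real^'n"
  assumes on: "orthonormal_basis u" and pos: "\<And>k. f k > 0"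
  shows "pd (spectral_matrix u f)"
  unfolding pd_def sym_mat_def
proof (intro conjI allI impI spectral_matrix_symmetric)
  fix v :: "real^'n" assume "v \<noteq> 0"
  then obtain k where k: "u k \<bullet> v \<noteq> 0" using orthonormal_basis_nonzero_coeff[OF on] by blast
  have "0 < f k * (u k \<bullet> v)\<^sup>2" using k pos by simp
  also have "\<dots> \<le> (\<Sum>k\<in>UNIV. f k * (u k \<bullet> v)\<^sup>2)"
    using pos by (intro member_le_sum) (simp_all add: less_imp_le)
  finally show "0 < v \<bullet> (spectral_matrix u f *v v)" by (simp add: spectral_matrix_quadratic_form)
qed

lemma pd_symmetric: "pd M \<Longrightarrow> transpose M = M"
  unfolding pd_def sym_mat_def by blast

lemma psd_symmetric: "psd M \<Longrightarrow> transpose M = M"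
  unfolding psd_def sym_mat_def by blast

lemma pd_eigenbasis_pos:
  assumes "pd X" "eigenbasis X u x"
  shows "x k > 0"
proof -
  note on = eigenbasisD(1)[OF assms(2)]
  have "u k \<noteq> 0" using orthonormal_basis_inner[OF on, of k k] by auto
  then have "0 < u k \<bullet> (X *v u k)" using assms(1) unfolding pd_def by blast
  also have "\<dots> = x k" using eigenbasisD(2)[OF assms(2)] orthonormal_basis_inner[OF on, of k k] by simp
  finally show ?thesis .
qed

lemma matrix_inv_eqI:
  fixes A B :: "real^'n^'n"
  assumes "A ** B = mat 1" "B ** A = mat 1"
  shows "matrix_inv A = B"
proof -
  have "matrix_inv A ** A = mat 1"
    unfolding matrix_inv_def using someI_ex[of "\<lambda>A'. A ** A' = mat 1 \<and> A' ** A = mat 1"] assms by blast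
  then have "matrix_inv A ** (A ** B) = B" by (simp add: matrix_mul_assoc)
  then show ?thesis using assms(1) by simp
qed

lemma resolvent_spectral_matrix:
  assumes es: "eigenbasis X u x" and nz: "\<And>k. x k + z \<noteq> 0"
  shows "matrix_inv (X + z *\<^sub>R mat 1) = spectral_matrix u (\<lambda>k. 1 / (x k + z))"
proof -
  note on = eigenbasisD(1)[OF es]
  have "X + z *\<^sub>R mat 1 = spectral_matrix u (\<lambda>k. x k + z * 1)"
    by (simp only: spectral_matrix_add spectral_matrix_scaleR spectral_matrix_one[OF on]
        eigenbasis_spectral_matrix[OF es, symmetric])
  then show ?thesis
    by (simp add: matrix_inv_eqI spectral_matrix_mult[OF on] nz spectral_matrix_one[OF on])
qed

lemma pd_square_eq_imp_eq:
  fixes S T :: "real^'n^'n"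
  assumes S: "pd S" and T: "pd T" and eq: "S ** S = T ** T"
  shows "S = T"
proof -
  have sS: "transpose S = S" and sT: "transpose T = T" using S T by (auto simp: pd_symmetric)
  then have "transpose (S - T) = S - T" by (simp add: vec_eq_iff transpose_def)
  then obtain w d where es: "eigenbasis (S - T) w d" by (rule symmetric_matrix_has_eigenbasis)
  note on = eigenbasisD(1)[OF es]
  have "d k = 0" for k
  proof -
    let ?v = "w k"
    have vv: "?v \<bullet> ?v = 1" using orthonormal_basis_inner[OF on, of k k] by simp
    then have "?v \<noteq> 0" by auto
    have Sv: "S *v ?v = T *v ?v + d k *\<^sub>R ?v"
      using eigenbasisD(2)[OF es, of k] by (simp add: matrix_vector_mult_diff_rdistrib algebra_simps)
    have "(S *v ?v) \<bullet> (S *v ?v) = (T *v ?v) \<bullet> (T *v ?v)"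
      using eq symmetric_matrix_inner_swap[OF sS, of ?v "S *v ?v"]
        symmetric_matrix_inner_swap[OF sT, of ?v "T *v ?v"]
      by (simp add: matrix_vector_mul_assoc)
    then have "d k * (2 * (?v \<bullet> (T *v ?v)) + d k) = 0"
      unfolding Sv using vv
      by (simp add: inner_add_left inner_add_right inner_commute algebra_simps power2_eq_square)
    moreover have "?v \<bullet> (S *v ?v) = ?v \<bullet> (T *v ?v) + d k"
      unfolding Sv using vv by (simp add: inner_add_right)
    moreover have "?v \<bullet> (S *v ?v) > 0" "?v \<bullet> (T *v ?v) > 0"
      using S T \<open>?v \<noteq> 0\<close> unfolding pd_def by auto
    ultimately show ?thesis by (smt (verit) mult_eq_0_iff)
  qed
  then have "S - T = spectral_matrix w (\<lambda>k. 0)"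
    using eigenbasis_spectral_matrix[OF es] by (metis ext)
  also have "\<dots> = 0" unfolding spectral_matrix_def by simp
  finally show ?thesis by simp
qed

lemma inv_sqrt_spectral_matrix:
  assumes X: "pd X" and es: "eigenbasis X u x"
  shows "inv_sqrt X = spectral_matrix u (\<lambda>k. 1 / sqrt (x k))"
  unfolding inv_sqrt_def
proof (rule the_equality)
  note on = eigenbasisD(1)[OF es]
  have pos: "x k > 0" for k by (rule pd_eigenbasis_pos[OF X es])
  have "matrix_inv X = matrix_inv (X + 0 *\<^sub>R mat 1)" by simp
  also have "\<dots> = spectral_matrix u (\<lambda>k. 1 / (x k + 0))"
    using pos by (intro resolvent_spectral_matrix[OF es]) (simp add: less_imp_neq[symmetric])
  finally show sqrt: "pd (spectral_matrix u (\<lambda>k. 1 / sqrt (x k))) \<and>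
      spectral_matrix u (\<lambda>k. 1 / sqrt (x k)) ** spectral_matrix u (\<lambda>k. 1 / sqrt (x k)) = matrix_inv X"
    using pos by (simp add: pd_spectral_matrix[OF on] spectral_matrix_mult[OF on]
        real_sqrt_mult[symmetric] less_imp_le)
  fix S assume "pd S \<and> S ** S = matrix_inv X"
  then show "S = spectral_matrix u (\<lambda>k. 1 / sqrt (x k))" using sqrt pd_square_eq_imp_eq by metis
qed

lemma eigenvalues_eigenbasis:
  assumes sym: "transpose X = X" and es: "eigenbasis X u x"
  shows "eigenvalues X = range x"
proof
  note on = eigenbasisD(1)[OF es]
  show "eigenvalues X \<subseteq> range x"
  proof
    fix l assume "l \<in> eigenvalues X"
    then obtain v where v: "v \<noteq> 0" "X *v v = l *\<^sub>R v" unfolding eigenvalues_def by blast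
    obtain k where k: "u k \<bullet> v \<noteq> 0" using orthonormal_basis_nonzero_coeff[OF on v(1)] by blast
    have "l * (u k \<bullet> v) = (X *v u k) \<bullet> v"
      using v(2) symmetric_matrix_inner_swap[OF sym, of "u k" v] by simp
    also have "\<dots> = x k * (u k \<bullet> v)" using eigenbasisD(2)[OF es] by simp
    finally show "l \<in> range x" using k by simp
  qed
  show "range x \<subseteq> eigenvalues X"
  proof clarify
    fix k
    have "u k \<noteq> 0" using orthonormal_basis_inner[OF on, of k k] by auto
    then show "x k \<in> eigenvalues X" using eigenbasisD(2)[OF es] unfolding eigenvalues_def by blast
  qed
qed

lemma lambda_min_eigenbasis:
  assumes "transpose X = X" "eigenbasis X u x"
  shows "lambda_min X = Min (range x)"
  unfolding lambda_min_def eigenvalues_eigenbasis[OF assms] ..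

lemma lambda_min_pos:
  assumes X: "pd X"
  shows "lambda_min X > 0"
proof -
  obtain u x where es: "eigenbasis X u x" using symmetric_matrix_has_eigenbasis[OF pd_symmetric[OF X]] .
  then show ?thesis
    using lambda_min_eigenbasis[OF pd_symmetric[OF X] es] pd_eigenbasis_pos[OF X es] by simp
qed

lemma psd_quadratic_form_le_trace:
  assumes A: "psd A"
  shows "y \<bullet> (A *v y) \<le> trace A * (y \<bullet> y)" and "0 \<le> trace A"
proof -
  obtain w a where es: "eigenbasis A w a" using symmetric_matrix_has_eigenbasis[OF psd_symmetric[OF A]] .
  note on = eigenbasisD(1)[OF es] and A_eq = eigenbasis_spectral_matrix[OF es]
  have a: "a k \<ge> 0" for k
    using A eigenbasisD(2)[OF es] orthonormal_basis_inner[OF on, of k k] unfolding psd_def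
    by (metis inner_scaleR_right mult.right_neutral)
  have tr: "trace A = (\<Sum>k\<in>UNIV. a k)" unfolding A_eq by (rule trace_spectral_matrix[OF on])
  show "0 \<le> trace A" unfolding tr using a by (simp add: sum_nonneg)
  have coeff: "(w k \<bullet> y)\<^sup>2 \<le> y \<bullet> y" for k
    unfolding orthonormal_basis_parseval[OF on, of y] by (rule member_le_sum) auto
  have "y \<bullet> (A *v y) = (\<Sum>k\<in>UNIV. a k * (w k \<bullet> y)\<^sup>2)"
    unfolding A_eq by (rule spectral_matrix_quadratic_form)
  also have "\<dots> \<le> (\<Sum>k\<in>UNIV. a k * (y \<bullet> y))" by (intro sum_mono mult_left_mono coeff a)
  also have "\<dots> = trace A * (y \<bullet> y)" unfolding tr by (simp add: sum_distrib_right)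
  finally show "y \<bullet> (A *v y) \<le> trace A * (y \<bullet> y)" .
qed

lemma psd_amgm:
  fixes A :: "real^'n^'n"
  assumes A: "psd A" and t: "t > 0"
  shows "2 * (y \<bullet> (A *v z)) \<le> t * (y \<bullet> (A *v y)) + (z \<bullet> (A *v z)) / t"
proof -
  have "z \<bullet> (A *v y) = y \<bullet> (A *v z)"
    using symmetric_matrix_inner_swap[OF psd_symmetric[OF A], of y z] by (simp add: inner_commute)
  moreover have "0 \<le> (t *\<^sub>R y - z) \<bullet> (A *v (t *\<^sub>R y - z))" using A unfolding psd_def by blast
  ultimately have "2 * (y \<bullet> (A *v z)) * t \<le> (t * (y \<bullet> (A *v y)) + (z \<bullet> (A *v z)) / t) * t"
    using t by (simp add: matrix_vector_mult_diff_distrib matrix_vector_mult_scaleR inner_diff_left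
        inner_diff_right algebra_simps)
  then show ?thesis using t by simp
qed

lemma resolvent_norm_le:
  assumes X: "pd X" and a: "0 \<le> a"
  defines "R \<equiv> matrix_inv (X + a *\<^sub>R mat 1)"
  shows "(R *v v) \<bullet> (R *v v) \<le> (v \<bullet> v) / (lambda_min X + a)\<^sup>2"
proof -
  obtain u x where es: "eigenbasis X u x" using symmetric_matrix_has_eigenbasis[OF pd_symmetric[OF X]] .
  have pos: "x k > 0" for k by (rule pd_eigenbasis_pos[OF X es])
  have m: "lambda_min X \<le> x k" for k
    using lambda_min_eigenbasis[OF pd_symmetric[OF X] es] by simp
  have R: "R = spectral_matrix u (\<lambda>k. 1 / (x k + a))"
    unfolding R_def using pos a by (intro resolvent_spectral_matrix[OF es]) (smt (verit))
  have "\<bar>1 / (x k + a)\<bar> \<le> 1 / (lambda_min X + a)" for k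
    using pos[of k] m[of k] lambda_min_pos[OF X] a by (simp add: frac_le)
  then have "(R *v v) \<bullet> (R *v v) \<le> (1 / (lambda_min X + a))\<^sup>2 * (v \<bullet> v)"
    unfolding R by (rule spectral_matrix_norm_le[OF eigenbasisD(1)[OF es]])
  then show ?thesis by (simp add: power_divide)
qed

section \<open>Some scalar integrals\<close>

lemma has_integral_inverse_sqrt_times_shift:
  fixes p :: real
  assumes p: "p > 0"
  shows "((\<lambda>a. 1 / (sqrt a * (p + a))) has_integral pi / sqrt p) {0..}"
proof -
  define F where "F a = 2 / sqrt p * arctan (sqrt a / sqrt p)" for a
  have "(F has_real_derivative 1 / (sqrt a * (p + a))) (at a)" if a: "a > 0" for a
  proof -
    have "((\<lambda>a. sqrt a / sqrt p) has_real_derivative inverse (sqrt a) / 2 / sqrt p) (at a)"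
      using DERIV_real_sqrt[OF a] by (rule DERIV_cdivide)
    then have "(F has_real_derivative 2 / sqrt p * (inverse (1 + (sqrt a / sqrt p)\<^sup>2) * (inverse (sqrt a) / 2 / sqrt p))) (at a)"
      unfolding F_def by (intro DERIV_cmult DERIV_chain2[OF DERIV_arctan])
    moreover have "2 / sqrt p * (inverse (1 + (sqrt a / sqrt p)\<^sup>2) * (inverse (sqrt a) / 2 / sqrt p))
        = 1 / (sqrt a * (p + a))"
    proof -
      have e: "(sqrt a / sqrt p)\<^sup>2 = a / p" "inverse (1 + a / p) = p / (p + a)"
        using a p by (simp_all add: power_divide field_simps)
      have cancel: "2 / s * (p / (p + a) * (inverse b / 2 / s)) = p / ((s * s) * ((p + a) * b))"
        if "s > 0" "b > 0" for s b using that a p by (simp add: divide_simps)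
      show ?thesis unfolding e using cancel[of "sqrt p" "sqrt a"] a p by (simp add: divide_simps)
    qed
    ultimately show ?thesis by simp
  qed
  then have int: "((\<lambda>a. 1 / (sqrt a * (p + a))) has_integral F y - F 0) {0..y}" if "y \<ge> 0" for y
  proof (intro fundamental_theorem_of_calculus_interior[OF that])
    show "continuous_on {0..y} F" unfolding F_def using p by (intro continuous_intros) auto
  qed (simp add: has_real_derivative_iff_has_vector_derivative[symmetric])
  show ?thesis
  proof (rule has_integral_to_inf)
    show "(\<lambda>a. 1 / (sqrt a * (p + a))) integrable_on {0..y}" for y
      using int[of y] by (cases "y \<ge> 0") (auto simp: integrable_on_empty)
    show "0 \<le> 1 / (sqrt y * (p + y))" if "0 \<le> y" for y using that p by simp
    have "filterlim (\<lambda>y. sqrt y / sqrt p) at_top at_top" using p by real_asymp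
    then have "(F \<longlongrightarrow> 2 / sqrt p * (pi / 2)) at_top"
      unfolding F_def by (intro tendsto_intros filterlim_compose[OF tendsto_arctan_at_top])
    moreover have "\<forall>\<^sub>F y in at_top. integral {0..y} (\<lambda>a. 1 / (sqrt a * (p + a))) = F y"
      using int by (intro eventually_at_top_linorderI[of 0]) (simp add: integral_unique F_def)
    ultimately show "((\<lambda>y. integral {0..y} (\<lambda>a. 1 / (sqrt a * (p + a)))) \<longlongrightarrow> pi / sqrt p) at_top"
      by (simp add: filterlim_cong)
  qed
qed

lemma has_integral_inverse_square_shift:
  fixes m :: real
  assumes m: "m > 0"
  shows "((\<lambda>z. 1 / (m + z)\<^sup>2) has_integral 1 / m) {0..}"
proof -
  define F where "F z = - 1 / (m + z)" for z
  have int: "((\<lambda>z. 1 / (m + z)\<^sup>2) has_integral F y - F 0) {0..y}" if "y \<ge> 0" for y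
  proof (rule fundamental_theorem_of_calculus[OF that])
    fix a assume "a \<in> {0..y}"
    then have "m + a > 0" using m by simp
    then have "(F has_real_derivative 1 / (m + a)\<^sup>2) (at a)"
      unfolding F_def by (auto intro!: derivative_eq_intros simp: power2_eq_square field_simps)
    then show "(F has_vector_derivative 1 / (m + a)\<^sup>2) (at a within {0..y})"
      by (simp add: has_real_derivative_iff_has_vector_derivative has_vector_derivative_at_within)
  qed
  show ?thesis
  proof (rule has_integral_to_inf)
    show "(\<lambda>z. 1 / (m + z)\<^sup>2) integrable_on {0..y}" for y
      using int[of y] by (cases "y \<ge> 0") (auto simp: integrable_on_empty)
    show "0 \<le> 1 / (m + y)\<^sup>2" if "0 \<le> y" for y using that m by simp
    have "\<forall>\<^sub>F y in at_top. integral {0..y} (\<lambda>z. 1 / (m + z)\<^sup>2) = F y - F 0"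
      using int by (intro eventually_at_top_linorderI[of 0]) (simp add: integral_unique)
    moreover have "((\<lambda>y. F y - F 0) \<longlongrightarrow> 1 / m) at_top"
      unfolding F_def using m by real_asymp
    ultimately show "((\<lambda>y. integral {0..y} (\<lambda>z. 1 / (m + z)\<^sup>2)) \<longlongrightarrow> 1 / m) at_top"
      by (simp add: filterlim_cong)
  qed
qed

lemma integrable_inverse_product_shift:
  fixes p q :: real
  assumes p: "p > 0" and q: "q > 0"
  shows "(\<lambda>z. 1 / ((p + z) * (q + z))) integrable_on {0..}"
proof (rule measurable_bounded_by_integrable_imp_integrable)
  define m where "m = min p q"
  have m: "m > 0" using p q unfolding m_def by simp
  show "(\<lambda>z. 1 / (m + z)\<^sup>2) integrable_on {0..}"
    using has_integral_inverse_square_shift[OF m] by blast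
  show "(\<lambda>z. 1 / ((p + z) * (q + z))) \<in> borel_measurable (lebesgue_on {0..})"
    using p q by (intro continuous_imp_measurable_on_sets_lebesgue continuous_intros) auto
  show "{0::real..} \<in> sets lebesgue" by simp
  fix z :: real assume z: "z \<in> {0..}"
  have "m + z \<le> p + z" "m + z \<le> q + z" "m + z > 0" using z m unfolding m_def by auto
  then have "(m + z)\<^sup>2 \<le> (p + z) * (q + z)" by (simp add: power2_eq_square mult_mono)
  then show "norm (1 / ((p + z) * (q + z))) \<le> 1 / (m + z)\<^sup>2"
    using \<open>m + z > 0\<close> z p q by (simp add: divide_simps)
qed

lemma powr_minus_half: "(x::real) \<ge> 0 \<Longrightarrow> x powr (- (1/2)) = 1 / sqrt x"
  by (simp add: powr_minus powr_half_sqrt inverse_eq_divide)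

lemma has_integral_inverse_sqrt:
  fixes c :: real
  assumes c: "c \<ge> 0"
  shows "((\<lambda>a. 1 / sqrt a) has_integral 2 * sqrt c) {0..c}"
proof -
  have "((\<lambda>x. x powr (- (1/2))) has_integral c powr (- (1/2) + 1) / (- (1/2) + 1)) {0..c}"
    using c by (intro has_integral_powr_from_0) auto
  then have "((\<lambda>x. x powr (- (1/2))) has_integral 2 * sqrt c) {0..c}"
    using c by (simp add: powr_half_sqrt mult.commute)
  then show ?thesis by (rule has_integral_eq[rotated]) (simp add: powr_minus_half)
qed

lemma has_integral_inverse_sqrt_cube:
  fixes C :: real
  assumes C: "C > 0"
  shows "((\<lambda>a. 1 / (a * sqrt a)) has_integral 2 / sqrt C) {C..}"
proof -
  have "((\<lambda>x. x powr (- (3/2))) has_integral - (C powr (- (3/2) + 1)) / (- (3/2) + 1)) {C..}"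
    using C by (intro has_integral_powr_to_inf) auto
  then have "((\<lambda>x. x powr (- (1/2) - 1)) has_integral 2 / sqrt C) {C..}"
    using C by (simp add: powr_minus_half)
  moreover have "x powr (- (1/2) - 1) = 1 / (x * sqrt x)" if "x \<in> {C..}" for x
  proof -
    have "x powr (- (1/2) - 1) = x powr (- (1/2)) / x" using that C by (subst powr_diff) simp
    then show ?thesis using that C by (simp add: powr_minus_half)
  qed
  ultimately show ?thesis by (rule has_integral_eq[rotated])
qed

lemma has_integral_inverse:
  fixes c C :: real
  assumes c: "c > 0" and cC: "c \<le> C"
  shows "((\<lambda>a. 1 / a) has_integral ln C - ln c) {c..C}"
proof (rule fundamental_theorem_of_calculus[OF cC])
  fix a assume "a \<in> {c..C}"
  then have "(ln has_real_derivative 1 / a) (at a)"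
    using c by (auto intro!: derivative_eq_intros)
  then show "(ln has_vector_derivative 1 / a) (at a within {c..C})"
    by (simp add: has_real_derivative_iff_has_vector_derivative has_vector_derivative_at_within)
qed

section \<open>Integral representations\<close>

lemma transpose_add: "transpose (A + B) = transpose A + transpose (B :: real^'n^'m)"
  by (simp add: vec_eq_iff transpose_def)

lemma bounded_linear_transpose: "bounded_linear (transpose :: real^'n^'m \<Rightarrow> real^'m^'n)"
  unfolding linear_conv_bounded_linear[symmetric]
  by (rule linearI) (simp_all add: transpose_add transpose_scalar)

lemma bounded_linear_matrix_vector_inner: "bounded_linear (\<lambda>N :: real^'n^'m. (N *v v) \<bullet> w)"
  unfolding linear_conv_bounded_linear[symmetric]
  by (rule linearI)
    (simp_all add: matrix_vector_mult_add_rdistrib inner_add_left scaleR_matrix_vector_assoc[symmetric])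

lemma sandwich_spectral_matrix:
  "spectral_matrix u f ** A ** spectral_matrix u g
     = (\<Sum>k\<in>UNIV. \<Sum>l\<in>UNIV. (f k * g l) *\<^sub>R (outer (u k) ** A ** outer (u l)))"
  unfolding spectral_matrix_def matrix_mult_sum_left matrix_mult_sum_right
  by (simp add: matrix_scalar_ac scalar_matrix_assoc[symmetric] mult.commute) (rule sum.swap)

lemma pd_resolvent_spectral_matrix:
  assumes X: "pd X" and es: "eigenbasis X u x" and z: "0 \<le> z"
  shows "matrix_inv (X + z *\<^sub>R mat 1) = spectral_matrix u (\<lambda>k. 1 / (x k + z))"
  using pd_eigenbasis_pos[OF X es] z by (intro resolvent_spectral_matrix[OF es]) (smt (verit))

lemma pd_resolvent_symmetric:
  assumes X: "pd X" and z: "0 \<le> z"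
  shows "transpose (matrix_inv (X + z *\<^sub>R mat 1)) = matrix_inv (X + z *\<^sub>R mat 1)"
proof -
  obtain u x where "eigenbasis X u x" using symmetric_matrix_has_eigenbasis[OF pd_symmetric[OF X]] .
  then show ?thesis by (simp add: pd_resolvent_spectral_matrix[OF X _ z] spectral_matrix_symmetric)
qed

lemma dlog_has_integral:
  assumes X: "pd X"
  shows "((\<lambda>z. matrix_inv (X + z *\<^sub>R mat 1) ** A ** matrix_inv (X + z *\<^sub>R mat 1))
          has_integral dlog X A) {0..}"
  unfolding dlog_def
proof (rule integrable_integral)
  obtain u x where es: "eigenbasis X u x" using symmetric_matrix_has_eigenbasis[OF pd_symmetric[OF X]] .
  have pos: "x k > 0" for k by (rule pd_eigenbasis_pos[OF X es])
  have "(\<lambda>z. \<Sum>k\<in>UNIV. \<Sum>l\<in>UNIV. (1 / ((x k + z) * (x l + z))) *\<^sub>R (outer (u k) ** A ** outer (u l)))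
      integrable_on {0..}"
    by (intro integrable_sum finite integrable_on_scaleR_left integrable_inverse_product_shift pos)
  then show "(\<lambda>z. matrix_inv (X + z *\<^sub>R mat 1) ** A ** matrix_inv (X + z *\<^sub>R mat 1)) integrable_on {0..}"
    by (rule integrable_eq) (simp add: pd_resolvent_spectral_matrix[OF X es] sandwich_spectral_matrix)
qed

lemma dlog_quadratic_form_has_integral:
  fixes X A :: "real^'n^'n"
  assumes X: "pd X"
  shows "((\<lambda>z. (matrix_inv (X + z *\<^sub>R mat 1) *v v) \<bullet> (A *v (matrix_inv (X + z *\<^sub>R mat 1) *v v)))
          has_integral v \<bullet> (dlog X A *v v)) {0..}"
proof -
  have quad: "((R ** A ** R) *v v) \<bullet> v = (R *v v) \<bullet> (A *v (R *v v))"
    if "transpose R = R" for R :: "real^'n^'n"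
  proof -
    have "((R ** A ** R) *v v) \<bullet> v = (R *v (A *v (R *v v))) \<bullet> v"
      by (simp add: matrix_vector_mul_assoc matrix_mul_assoc)
    also have "\<dots> = (A *v (R *v v)) \<bullet> (R *v v)" by (rule symmetric_matrix_inner_swap[OF that])
    finally show ?thesis by (simp only: inner_commute)
  qed
  have "((\<lambda>z. ((matrix_inv (X + z *\<^sub>R mat 1) ** A ** matrix_inv (X + z *\<^sub>R mat 1)) *v v) \<bullet> v)
      has_integral (dlog X A *v v) \<bullet> v) {0..}"
    using has_integral_linear[OF dlog_has_integral[OF X] bounded_linear_matrix_vector_inner[of v v]]
    by (simp add: o_def)
  then show ?thesis unfolding inner_commute[of v "dlog X A *v v"]
    by (rule has_integral_eq[rotated]) (simp add: quad pd_resolvent_symmetric[OF X])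
qed

lemma dlog_symmetric:
  assumes X: "pd X" and A: "transpose A = A"
  shows "transpose (dlog X A) = dlog X A"
proof -
  have "((\<lambda>z. transpose (matrix_inv (X + z *\<^sub>R mat 1) ** A ** matrix_inv (X + z *\<^sub>R mat 1)))
      has_integral transpose (dlog X A)) {0..}"
    using has_integral_linear[OF dlog_has_integral[OF X] bounded_linear_transpose] by (simp add: o_def)
  then have "((\<lambda>z. matrix_inv (X + z *\<^sub>R mat 1) ** A ** matrix_inv (X + z *\<^sub>R mat 1))
      has_integral transpose (dlog X A)) {0..}"
    by (rule has_integral_eq[rotated])
      (simp add: matrix_transpose_mul pd_resolvent_symmetric[OF X] A matrix_mul_assoc)
  then show ?thesis using dlog_has_integral[OF X] has_integral_unique by blast
qed

lemma inv_sqrt_symmetric: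
  assumes X: "pd X"
  shows "transpose (inv_sqrt X) = inv_sqrt X"
proof -
  obtain u x where "eigenbasis X u x" using symmetric_matrix_has_eigenbasis[OF pd_symmetric[OF X]] .
  then show ?thesis by (simp add: inv_sqrt_spectral_matrix[OF X] spectral_matrix_symmetric)
qed

lemma inv_sqrt_has_integral:
  assumes X: "pd X"
  shows "((\<lambda>a. (1 / sqrt a) *\<^sub>R matrix_inv (X + a *\<^sub>R mat 1)) has_integral pi *\<^sub>R inv_sqrt X) {0..}"
proof -
  obtain u x where es: "eigenbasis X u x" using symmetric_matrix_has_eigenbasis[OF pd_symmetric[OF X]] .
  have pos: "x k > 0" for k by (rule pd_eigenbasis_pos[OF X es])
  have "((\<lambda>a. \<Sum>k\<in>UNIV. (1 / (sqrt a * (x k + a))) *\<^sub>R outer (u k))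
      has_integral (\<Sum>k\<in>UNIV. (pi / sqrt (x k)) *\<^sub>R outer (u k))) {0..}"
    by (intro has_integral_sum finite has_integral_scaleR_left has_integral_inverse_sqrt_times_shift pos)
  then have "((\<lambda>a. (1 / sqrt a) *\<^sub>R matrix_inv (X + a *\<^sub>R mat 1))
      has_integral (\<Sum>k\<in>UNIV. (pi / sqrt (x k)) *\<^sub>R outer (u k))) {0..}"
    by (rule has_integral_eq[rotated])
      (simp add: pd_resolvent_spectral_matrix[OF X es] spectral_matrix_def scaleR_sum_right)
  then show ?thesis
    by (simp add: inv_sqrt_spectral_matrix[OF X es] spectral_matrix_def scaleR_sum_right)
qed

section \<open>An integral estimate by AM-GM on three ranges\<close>

lemma has_integral_le_three_pieces:
  fixes f h\<^sub>1 h\<^sub>2 h\<^sub>3 :: "real \<Rightarrow> real"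
  assumes f: "(f has_integral I) {0..}"
    and h: "(h\<^sub>1 has_integral I\<^sub>1) {0..c}" "(h\<^sub>2 has_integral I\<^sub>2) {c..C}" "(h\<^sub>3 has_integral I\<^sub>3) {C..}"
    and nonneg: "\<And>a. a \<in> {0..c} \<Longrightarrow> 0 \<le> h\<^sub>1 a" "\<And>a. a \<in> {c..C} \<Longrightarrow> 0 \<le> h\<^sub>2 a"
      "\<And>a. a \<in> {C..} \<Longrightarrow> 0 \<le> h\<^sub>3 a"
    and le: "\<And>a. a \<in> {0..c} \<Longrightarrow> f a \<le> h\<^sub>1 a" "\<And>a. a \<in> {c..C} \<Longrightarrow> f a \<le> h\<^sub>2 a"
      "\<And>a. a \<in> {C..} \<Longrightarrow> f a \<le> h\<^sub>3 a"
    and c: "0 \<le> c" "c \<le> C"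
  shows "I \<le> I\<^sub>1 + I\<^sub>2 + I\<^sub>3"
proof -
  define H where "H a = (if a \<in> {0..c} then h\<^sub>1 a else 0) + (if a \<in> {c..C} then h\<^sub>2 a else 0)
      + (if a \<in> {C..} then h\<^sub>3 a else 0)" for a
  have "(H has_integral I\<^sub>1 + I\<^sub>2 + I\<^sub>3) {0..}"
    unfolding H_def using h c by (intro has_integral_add; subst has_integral_restrict) auto
  moreover have "f a \<le> H a" if "a \<in> {0..}" for a
    using that c nonneg[of a] le[of a] unfolding H_def by (cases "a \<le> c"; cases "a \<le> C") auto
  ultimately show ?thesis using has_integral_le[OF f] by blast
qed

lemma integral_le_three_ranges:
  fixes \<psi> g :: "real \<Rightarrow> real"
  assumes \<psi>: "((\<lambda>a. \<psi> a / sqrt a) has_integral I) {0..}"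
    and g: "g integrable_on {c..C}"
    and g_nonneg: "\<And>a. 0 \<le> a \<Longrightarrow> 0 \<le> g a"
    and g_le: "\<And>a. 0 \<le> a \<Longrightarrow> g a \<le> K / (m + a)\<^sup>2"
    and amgm: "\<And>a t. 0 \<le> a \<Longrightarrow> 0 < t \<Longrightarrow> 2 * \<psi> a \<le> t * g a + M / t"
    and M: "0 \<le> M" and m: "0 < m" and c: "0 < c" "c \<le> C"
    and t: "0 < t\<^sub>1" "0 < t\<^sub>2" "0 < t\<^sub>3"
  shows "I \<le> sqrt c * (t\<^sub>1 * K / m\<^sup>2 + M / t\<^sub>1)
             + (t\<^sub>2 / 2 * integral {c..C} g + M / (2 * t\<^sub>2) * (ln C - ln c))
             + (t\<^sub>3 * K + M / t\<^sub>3) / sqrt C"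
proof -
  have "0 \<le> K / m\<^sup>2" using g_nonneg[of 0] g_le[of 0] by simp
  then have K: "0 \<le> K" using m by (smt (verit) divide_neg_pos zero_less_power)
  have g_le_m: "g a \<le> K / m\<^sup>2" if "0 \<le> a" for a
    using g_le[OF that] frac_le[OF K order.refl, of "m\<^sup>2" "(m + a)\<^sup>2"] m that
    by (simp add: power_mono)
  have g_le_a: "g a \<le> K / a\<^sup>2" if "0 < a" for a
    using g_le[of a] frac_le[OF K order.refl, of "a\<^sup>2" "(m + a)\<^sup>2"] m that
    by (simp add: power_mono)
  define c\<^sub>1 where "c\<^sub>1 = (t\<^sub>1 * K / m\<^sup>2 + M / t\<^sub>1) / 2"
  define c\<^sub>3 where "c\<^sub>3 = (t\<^sub>3 * K + M / t\<^sub>3) / 2"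
  define h\<^sub>1 where "h\<^sub>1 a = 1 / sqrt a * c\<^sub>1" for a
  define h\<^sub>2 where "h\<^sub>2 a = t\<^sub>2 / 2 * g a + M / (2 * t\<^sub>2) * (1 / a)" for a
  define h\<^sub>3 where "h\<^sub>3 a = 1 / (a * sqrt a) * c\<^sub>3" for a
  have c\<^sub>1: "0 \<le> c\<^sub>1" and c\<^sub>3: "0 \<le> c\<^sub>3" unfolding c\<^sub>1_def c\<^sub>3_def using t K M by simp_all
  have h\<^sub>1_nonneg: "0 \<le> h\<^sub>1 a" if "0 \<le> a" for a unfolding h\<^sub>1_def using that c\<^sub>1 by simp
  have h\<^sub>2_nonneg: "0 \<le> h\<^sub>2 a" if "0 < a" for a
    unfolding h\<^sub>2_def using that t(2) M g_nonneg[of a] by simp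
  have h\<^sub>3_nonneg: "0 \<le> h\<^sub>3 a" if "0 \<le> a" for a unfolding h\<^sub>3_def using that c\<^sub>3 by simp
  \<comment> \<open>AM-GM with weight \<open>t\<^sub>1\<close>, \<open>t\<^sub>2 sqrt a\<close> and \<open>t\<^sub>3 a\<close> on the three ranges\<close>
  have bound\<^sub>1: "\<psi> a / sqrt a \<le> h\<^sub>1 a" if "0 \<le> a" for a
  proof -
    have "t\<^sub>1 * g a \<le> t\<^sub>1 * (K / m\<^sup>2)"
      by (rule mult_left_mono[OF g_le_m[OF that]]) (use t(1) in simp)
    then have "\<psi> a \<le> c\<^sub>1" unfolding c\<^sub>1_def using amgm[OF that t(1)] by simp
    from divide_right_mono[OF this, of "sqrt a"] show ?thesis unfolding h\<^sub>1_def using that by simp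
  qed
  have bound\<^sub>2: "\<psi> a / sqrt a \<le> h\<^sub>2 a" if "0 < a" for a
  proof -
    define r where "r = sqrt a"
    have r: "0 < r" "a = r\<^sup>2" unfolding r_def using that by simp_all
    have "2 * \<psi> a \<le> (t\<^sub>2 * r) * g a + M / (t\<^sub>2 * r)" using amgm r t by simp
    then show ?thesis unfolding h\<^sub>2_def using r t by (simp add: field_simps power2_eq_square)
  qed
  have bound\<^sub>3: "\<psi> a / sqrt a \<le> h\<^sub>3 a" if "C \<le> a" for a
  proof -
    have a: "0 < a" using that c by simp
    have "(t\<^sub>3 * a) * g a \<le> (t\<^sub>3 * a) * (K / a\<^sup>2)"
      by (rule mult_left_mono[OF g_le_a[OF a]]) (use a t(3) in simp)
    then have "2 * \<psi> a \<le> (t\<^sub>3 * a) * (K / a\<^sup>2) + M / (t\<^sub>3 * a)"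
      using amgm[of a "t\<^sub>3 * a"] a t(3) by simp
    then have "\<psi> a \<le> c\<^sub>3 / a" unfolding c\<^sub>3_def using a t by (simp add: field_simps power2_eq_square)
    then show ?thesis unfolding h\<^sub>3_def using a by (simp add: divide_right_mono field_simps)
  qed
  have "(h\<^sub>1 has_integral 2 * sqrt c * c\<^sub>1) {0..c}"
    unfolding h\<^sub>1_def by (rule has_integral_mult_left[OF has_integral_inverse_sqrt]) (use c in simp)
  moreover have "(h\<^sub>2 has_integral t\<^sub>2 / 2 * integral {c..C} g + M / (2 * t\<^sub>2) * (ln C - ln c)) {c..C}"
    unfolding h\<^sub>2_def
    by (intro has_integral_add has_integral_mult_right integrable_integral g has_integral_inverse c)
  moreover have "(h\<^sub>3 has_integral 2 / sqrt C * c\<^sub>3) {C..}"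
    unfolding h\<^sub>3_def by (rule has_integral_mult_left[OF has_integral_inverse_sqrt_cube]) (use c in simp)
  ultimately have "I \<le> 2 * sqrt c * c\<^sub>1 + (t\<^sub>2 / 2 * integral {c..C} g + M / (2 * t\<^sub>2) * (ln C - ln c))
      + 2 / sqrt C * c\<^sub>3"
    using c by (intro has_integral_le_three_pieces[OF \<psi>])
      (auto intro: h\<^sub>1_nonneg h\<^sub>2_nonneg h\<^sub>3_nonneg bound\<^sub>1 bound\<^sub>2 bound\<^sub>3)
  moreover have "2 * sqrt c * c\<^sub>1 = sqrt c * (t\<^sub>1 * K / m\<^sup>2 + M / t\<^sub>1)" unfolding c\<^sub>1_def by simp
  moreover have "2 / sqrt C * c\<^sub>3 = (t\<^sub>3 * K + M / t\<^sub>3) / sqrt C"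
    using c by (simp add: c\<^sub>3_def field_simps)
  ultimately show ?thesis by linarith
qed

lemma amgm_integral_estimate:
  fixes \<psi> g :: "real \<Rightarrow> real"
  assumes \<psi>: "((\<lambda>a. \<psi> a / sqrt a) has_integral pi * M) {0..}"
    and g: "(g has_integral D) {0..}"
    and g_nonneg: "\<And>a. 0 \<le> a \<Longrightarrow> 0 \<le> g a"
    and g_le: "\<And>a. 0 \<le> a \<Longrightarrow> g a \<le> K / (m + a)\<^sup>2"
    and amgm: "\<And>a t. 0 \<le> a \<Longrightarrow> 0 < t \<Longrightarrow> 2 * \<psi> a \<le> t * g a + M / t"
    and M: "0 \<le> M" and m: "0 < m" and c: "0 < c" "c \<le> C"
  shows "M \<le> 3 * (ln C - ln c) / pi\<^sup>2 * D + (12 * c / (pi\<^sup>2 * m\<^sup>2) + 12 / (pi\<^sup>2 * C)) * K"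
proof -
  define L where "L = ln C - ln c"
  have L: "0 \<le> L" unfolding L_def using c by simp
  have C: "0 < C" using c by simp
  define D' where "D' = integral {c..C} g"
  have "g integrable_on {c..C}"
    using c by (intro integrable_on_subinterval[OF has_integral_integrable[OF g]]) auto
  then have g': "(g has_integral D') {c..C}" unfolding D'_def by (rule integrable_integral)
  have D'_le: "D' \<le> D" by (rule has_integral_subset_le[OF _ g' g]) (use c g_nonneg in auto)
  define t\<^sub>2 where "t\<^sub>2 = (if 0 < L then 3 * L / pi else 1)"
  have main: "pi * M \<le> sqrt c * (6 * sqrt c / pi * K / m\<^sup>2 + M / (6 * sqrt c / pi))
             + (t\<^sub>2 / 2 * D' + M / (2 * t\<^sub>2) * L)
             + (6 / (pi * sqrt C) * K + M / (6 / (pi * sqrt C))) / sqrt C"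
    unfolding D'_def L_def
    by (rule integral_le_three_ranges[OF \<psi> _ g_nonneg g_le amgm M m c])
      (use \<open>g integrable_on {c..C}\<close> c L in \<open>auto simp: t\<^sub>2_def\<close>)
  have range\<^sub>1: "sqrt c * (6 * sqrt c / pi * K / m\<^sup>2 + M / (6 * sqrt c / pi))
      = 6 * c * K / (pi * m\<^sup>2) + pi * M / 6"
    using c by (simp add: field_simps real_sqrt_mult[symmetric])
  have range\<^sub>3: "(6 / (pi * sqrt C) * K + M / (6 / (pi * sqrt C))) / sqrt C = 6 * K / (pi * C) + pi * M / 6"
    using C by (simp add: field_simps real_sqrt_mult[symmetric])
  have range\<^sub>2: "t\<^sub>2 / 2 * D' + M / (2 * t\<^sub>2) * L \<le> 3 * L * D' / (2 * pi) + pi * M / 6"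
  proof (cases "0 < L")
    case False
    then have "L = 0" "C = c" using L c unfolding L_def by auto
    then show ?thesis using M unfolding D'_def by simp
  qed (simp add: t\<^sub>2_def field_simps)
  have half: "pi * M / 2 \<le> 6 * c * K / (pi * m\<^sup>2) + 6 * K / (pi * C) + 3 * L * D' / (2 * pi)"
    using main[unfolded range\<^sub>1 range\<^sub>3] range\<^sub>2 by linarith
  have "M = 2 / pi * (pi * M / 2)" by simp
  also have "\<dots> \<le> 2 / pi * (6 * c * K / (pi * m\<^sup>2) + 6 * K / (pi * C) + 3 * L * D' / (2 * pi))"
    by (rule mult_left_mono[OF half]) simp
  also have "\<dots> = 3 * L / pi\<^sup>2 * D' + (12 * c / (pi\<^sup>2 * m\<^sup>2) + 12 / (pi\<^sup>2 * C)) * K"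
    by (simp add: field_simps power2_eq_square)
  also have "\<dots> \<le> 3 * L / pi\<^sup>2 * D + (12 * c / (pi\<^sup>2 * m\<^sup>2) + 12 / (pi\<^sup>2 * C)) * K"
    using D'_le L by (intro add_right_mono mult_left_mono) auto
  finally show ?thesis unfolding L_def .
qed

lemma inv_sqrt_sandwich_quadratic_form_le:
  assumes X: "pd X" and A: "psd A" and c: "0 < c" "c \<le> C"
  shows "(inv_sqrt X *v v) \<bullet> (A *v (inv_sqrt X *v v))
    \<le> 3 * (ln C - ln c) / pi\<^sup>2 * (v \<bullet> (dlog X A *v v))
      + (12 * c / (pi\<^sup>2 * (lambda_min X)\<^sup>2) + 12 / (pi\<^sup>2 * C)) * (trace A * (v \<bullet> v))"
proof -
  define R where "R a = matrix_inv (X + a *\<^sub>R mat 1)" for a :: real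
  define s where "s = inv_sqrt X *v v"
  have quad_nonneg: "0 \<le> y \<bullet> (A *v y)" for y using A unfolding psd_def by blast
  show ?thesis unfolding s_def[symmetric]
  proof (rule amgm_integral_estimate[where \<psi> = "\<lambda>a. (R a *v v) \<bullet> (A *v s)"
        and g = "\<lambda>a. (R a *v v) \<bullet> (A *v (R a *v v))"])
    show "((\<lambda>a. (R a *v v) \<bullet> (A *v s) / sqrt a) has_integral pi * (s \<bullet> (A *v s))) {0..}"
      using has_integral_linear[OF inv_sqrt_has_integral[OF X] bounded_linear_matrix_vector_inner]
      by (simp add: o_def R_def s_def scaleR_matrix_vector_assoc[symmetric])
    show "((\<lambda>a. (R a *v v) \<bullet> (A *v (R a *v v))) has_integral v \<bullet> (dlog X A *v v)) {0..}"
      unfolding R_def by (rule dlog_quadratic_form_has_integral[OF X])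
    show "(R a *v v) \<bullet> (A *v (R a *v v)) \<le> trace A * (v \<bullet> v) / (lambda_min X + a)\<^sup>2"
      if "0 \<le> a" for a
    proof -
      have "(R a *v v) \<bullet> (A *v (R a *v v)) \<le> trace A * ((R a *v v) \<bullet> (R a *v v))"
        by (rule psd_quadratic_form_le_trace(1)[OF A])
      also have "\<dots> \<le> trace A * ((v \<bullet> v) / (lambda_min X + a)\<^sup>2)"
        unfolding R_def
        by (intro mult_left_mono resolvent_norm_le[OF X that] psd_quadratic_form_le_trace(2)[OF A])
      finally show ?thesis by simp
    qed
    show "2 * ((R a *v v) \<bullet> (A *v s)) \<le> t * ((R a *v v) \<bullet> (A *v (R a *v v))) + s \<bullet> (A *v s) / t"
      if "0 < t" for a t
      by (rule psd_amgm[OF A that])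
  qed (use quad_nonneg lambda_min_pos[OF X] c in auto)
qed

lemma loewner_leI:
  fixes M N :: "real^'n^'n"
  assumes "transpose M = M" "transpose N = N" "\<And>v. v \<bullet> (M *v v) \<le> v \<bullet> (N *v v)"
  shows "loewner_le M N"
  unfolding loewner_le_def psd_def sym_mat_def
  using assms by (simp add: vec_eq_iff transpose_def matrix_vector_mult_diff_rdistrib inner_diff_right)

theorem lemmaB1:
  fixes X A :: "real^'n^'n" and c C :: real
  assumes "pd X" and "psd A" and "0 < c" and "c \<le> C"
  shows "loewner_le (inv_sqrt X ** A ** inv_sqrt X)
           ((3 * (ln C - ln c) / pi\<^sup>2) *\<^sub>R dlog X A
            + ((12 * c * real CARD('n) / (pi\<^sup>2 * (lambda_min X)\<^sup>2)
                + 12 * real CARD('n) / (pi\<^sup>2 * C)) * trace A) *\<^sub>R mat 1)"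
proof (rule loewner_leI)
  note X = assms(1) and A = assms(2)
  let ?S = "inv_sqrt X" and ?\<alpha> = "3 * (ln C - ln c) / pi\<^sup>2"
  let ?\<kappa> = "12 * c / (pi\<^sup>2 * (lambda_min X)\<^sup>2) + 12 / (pi\<^sup>2 * C)"
  let ?\<beta> = "(12 * c * real CARD('n) / (pi\<^sup>2 * (lambda_min X)\<^sup>2) + 12 * real CARD('n) / (pi\<^sup>2 * C))
      * trace A"
  show "transpose (?S ** A ** ?S) = ?S ** A ** ?S"
    using inv_sqrt_symmetric[OF X] psd_symmetric[OF A] by (simp add: matrix_transpose_mul matrix_mul_assoc)
  show "transpose (?\<alpha> *\<^sub>R dlog X A + ?\<beta> *\<^sub>R mat 1) = ?\<alpha> *\<^sub>R dlog X A + ?\<beta> *\<^sub>R mat 1"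
    by (simp add: transpose_add transpose_scalar dlog_symmetric[OF X psd_symmetric[OF A]])
  fix v :: "real^'n"
  have "v \<bullet> ((?S ** A ** ?S) *v v) = (?S *v v) \<bullet> (A *v (?S *v v))"
    using symmetric_matrix_inner_swap[OF inv_sqrt_symmetric[OF X], of v]
    by (simp add: matrix_vector_mul_assoc[symmetric] matrix_mul_assoc[symmetric])
  also have "\<dots> \<le> ?\<alpha> * (v \<bullet> (dlog X A *v v)) + ?\<kappa> * (trace A * (v \<bullet> v))"
    by (rule inv_sqrt_sandwich_quadratic_form_le[OF assms])
  \<comment> \<open>the dimension factor is slack\<close>
  also have "?\<kappa> * (trace A * (v \<bullet> v)) \<le> real CARD('n) * (?\<kappa> * (trace A * (v \<bullet> v)))"
  proof -
    have "0 \<le> ?\<kappa> * (trace A * (v \<bullet> v))"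
      using assms lambda_min_pos[OF X] psd_quadratic_form_le_trace(2)[OF A] by simp
    from mult_right_mono[OF _ this, of 1 "real CARD('n)"] show ?thesis by simp
  qed
  also have "real CARD('n) * (?\<kappa> * (trace A * (v \<bullet> v))) = ?\<beta> * (v \<bullet> v)"
    by (simp add: field_simps)
  also have "?\<alpha> * (v \<bullet> (dlog X A *v v)) + ?\<beta> * (v \<bullet> v) = v \<bullet> ((?\<alpha> *\<^sub>R dlog X A + ?\<beta> *\<^sub>R mat 1) *v v)"
    by (simp add: matrix_vector_mult_add_rdistrib inner_add_right scaleR_matrix_vector_assoc[symmetric])
  finally show "v \<bullet> ((?S ** A ** ?S) *v v) \<le> v \<bullet> ((?\<alpha> *\<^sub>R dlog X A + ?\<beta> *\<^sub>R mat 1) *v v)"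
    by simp
qed

end
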